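(* Let $d\geq 2$ and $k\geq 0$ be integers and let $G$ be a graph of order $n\geq 2d+k$ whose girth satisfies $g(G)\geq 2d$. Then $\Delta_d^t(G)$ is $(k-1)$-connected.
   Context: All graphs are finite and simple; $\alpha(G)$ is the independence number and $G[S]$ the induced subgraph on $S$. $\Delta_d^t(G)=\{\sigma\subseteq V(G):\ \alpha(G[V(G)\setminus\sigma])\geq d\}$. The girth $g(G)$ is the minimum length of a cycle in $G$, and $\infty$ if $G$ has no cycles. A space is $m$-connected if it is nonempty and $\pi_i$ vanishes for all $0\le i\le m$ (for $m=-1$: nonempty). *)

theory Defs
  imports "HOL-Analysis.Analysis" "HOL-Library.Extended_Nat"
begin

definition simple_graph :: "('a \<Rightarrow> 'a \<Rightarrow> bool) \<Rightarrow> bool" where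
  "simple_graph E \<longleftrightarrow> (\<forall>u v. E u v \<longrightarrow> E v u) \<and> (\<forall>v. \<not> E v v)"

definition independent_set :: "('a \<Rightarrow> 'a \<Rightarrow> bool) \<Rightarrow> 'a set \<Rightarrow> bool" where
  "independent_set E I \<longleftrightarrow> (\<forall>u\<in>I. \<forall>v\<in>I. \<not> E u v)"

definition indep_num :: "('a \<Rightarrow> 'a \<Rightarrow> bool) \<Rightarrow> 'a set \<Rightarrow> nat" where
  "indep_num E S = Max {card I | I. I \<subseteq> S \<and> independent_set E I}"

definition has_cycle_of_length :: "('a \<Rightarrow> 'a \<Rightarrow> bool) \<Rightarrow> nat \<Rightarrow> bool" where
  "has_cycle_of_length E L \<longleftrightarrow> L \<ge> 3 \<and>
     (\<exists>c :: nat \<Rightarrow> 'a. inj_on c {..<L} \<and> (\<forall>i<L. E (c i) (c (Suc i mod L))))"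

text \<open>Girth: minimum cycle length, \<infinity> if acyclic (Inf {} = \<infinity> in enat).\<close>
definition girth :: "('a \<Rightarrow> 'a \<Rightarrow> bool) \<Rightarrow> enat" where
  "girth E = Inf {enat L | L. has_cycle_of_length E L}"

definition Delta_t :: "nat \<Rightarrow> ('a \<Rightarrow> 'a \<Rightarrow> bool) \<Rightarrow> 'a set set" where
  "Delta_t d E = {\<sigma>. indep_num E (UNIV - \<sigma>) \<ge> d}"

text \<open>Geometric realization of an abstract simplicial complex K on a finite
vertex type: points of the standard simplex in R^V whose support is a face of K,
with the subspace topology of the product (= Euclidean) topology.\<close>
definition geom_real :: "('a::finite) set set \<Rightarrow> ('a \<Rightarrow> real) topology" where
  "geom_real K = subtopology (powertop_real UNIV)
     {x. (\<forall>v. 0 \<le> x v) \<and> sum x UNIV = 1 \<and> {v. x v \<noteq> 0} \<in> K}"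

text \<open>m-connected (m \<ge> -1): nonempty, and \<pi>_i vanishes for 0 \<le> i \<le> m,
expressed as: every continuous map S^i \<rightarrow> X is homotopic to a constant map.\<close>
definition m_connected :: "int \<Rightarrow> 'b topology \<Rightarrow> bool" where
  "m_connected m X \<longleftrightarrow> topspace X \<noteq> {} \<and>
     (\<forall>i::nat. int i \<le> m \<longrightarrow>
        (\<forall>f. continuous_map (nsphere i) X f \<longrightarrow>
           (\<exists>c. homotopic_with (\<lambda>_. True) (nsphere i) X f (\<lambda>_. c))))"

end

theory Submission
  imports Defs
begin

(* In a graph of girth at least 2d, fewer than 2d vertices induce a forest, so they contain a
   vertex of degree at most one; deleting it together with its neighbour and recursing yields an
   independent subset of at least half the size.  Hence after removing any k + 1 vertices from a
   graph on at least 2d + k vertices, 2d - 1 remaining vertices still contain d independent ones: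
   Delta_d^t(G) contains every set of at most k + 1 vertices, i.e. the full k-skeleton of the
   simplex on V(G).  Such a complex is (k - 1)-connected: a map from the i-sphere, i < k, extends
   over the (i + 1)-ball into the whole simplex, and as every missing face has dimension greater
   than i + 1, the extension can be pushed off the missing faces, one maximal face at a time,
   onto their relative boundaries. *)

section \<open>Independent sets in graphs of large girth\<close>

lemma finite_independent_cards:
  "finite {card I | I. I \<subseteq> (S::'a::finite set) \<and> independent_set E I}"
  by (rule finite_subset[of _ "card ` Pow S"]) auto

lemma card_le_indep_num:
  fixes S :: "'a::finite set"
  assumes "I \<subseteq> S" "independent_set E I"
  shows "card I \<le> indep_num E S"
  unfolding indep_num_def using assms finite_independent_cards[of S E]
  by (intro Max_ge) auto

lemma indep_num_mono:
  fixes S :: "'a::finite set"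
  assumes "S \<subseteq> S'"
  shows "indep_num E S \<le> indep_num E S'"
  unfolding indep_num_def
proof (rule Max_mono)
  show "{card I |I. I \<subseteq> S \<and> independent_set E I} \<noteq> {}"
    unfolding independent_set_def by blast
qed (use assms finite_independent_cards in blast)+

lemma girth_le_cycle_length:
  assumes "has_cycle_of_length E L"
  shows "girth E \<le> enat L"
  unfolding girth_def using assms by (intro Inf_lower) auto

lemma non_backtracking_walk:
  assumes "v \<in> W" and deg: "\<And>v. v \<in> W \<Longrightarrow> \<exists>u\<in>W. \<exists>w\<in>W. u \<noteq> w \<and> E v u \<and> E v w"
  obtains w :: "nat \<Rightarrow> 'a"
  where "\<And>n. w n \<in> W" "\<And>n. E (w n) (w (Suc n))" "\<And>n. w (Suc (Suc n)) \<noteq> w n"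
proof -
  define nxt where "nxt p c = (SOME x. x \<in> W \<and> E c x \<and> x \<noteq> p)" for p c
  have nxt: "nxt p c \<in> W \<and> E c (nxt p c) \<and> nxt p c \<noteq> p" if "c \<in> W" for c p
  proof -
    have "\<exists>x. x \<in> W \<and> E c x \<and> x \<noteq> p"
      using deg[OF that] by metis
    then show ?thesis
      unfolding nxt_def by (rule someI_ex)
  qed
  obtain u where u: "u \<in> W" "E v u"
    using deg[OF \<open>v \<in> W\<close>] by blast
  define s where "s n = ((\<lambda>(p, c). (c, nxt p c)) ^^ n) (v, u)" for n
  define w where "w n = fst (s n)" for n
  have w_Suc: "w (Suc n) = snd (s n)" for n
    by (simp add: w_def s_def split: prod.split)
  have w_Suc_Suc: "w (Suc (Suc n)) = nxt (w n) (w (Suc n))" for n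
    by (simp add: w_Suc w_def s_def split: prod.split)
  have walk: "w n \<in> W \<and> w (Suc n) \<in> W \<and> E (w n) (w (Suc n))" for n
  proof (induction n)
    case 0
    then show ?case
      using \<open>v \<in> W\<close> u by (simp add: w_Suc w_def s_def)
  next
    case (Suc n)
    then show ?case
      using nxt[of "w (Suc n)" "w n"] by (simp add: w_Suc_Suc)
  qed
  show thesis
  proof
    show "w (Suc (Suc n)) \<noteq> w n" for n
      using nxt walk by (simp add: w_Suc_Suc)
  qed (use walk in auto)
qed

lemma first_repetition:
  assumes "finite W" "\<And>n. w n \<in> W"
  obtains a b where "a < b" "b \<le> card W" "w a = w b" "inj_on w {a..<b}"
proof -
  define P where "P b \<longleftrightarrow> (\<exists>a<b. w a = w b)" for b
  have "\<not> inj_on w {..card W}"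
  proof
    assume "inj_on w {..card W}"
    then have "card {..card W} \<le> card W"
      using assms by (intro card_inj_on_le) auto
    then show False by simp
  qed
  then obtain x y where "x < y" "y \<le> card W" "w x = w y"
    unfolding inj_on_def by (metis atMost_iff linorder_neq_iff)
  then have "P y"
    unfolding P_def by blast
  define b where "b = (LEAST b. P b)"
  have least: "b \<le> b'" if "P b'" for b'
    unfolding b_def using that by (rule Least_le)
  have b: "P b" "b \<le> card W"
    using \<open>P y\<close> least[OF \<open>P y\<close>] \<open>y \<le> card W\<close> unfolding b_def by (auto intro: LeastI)
  obtain a where "a < b" "w a = w b"
    using b(1) unfolding P_def by blast
  moreover have "inj_on w {a..<b}"
  proof (rule inj_onI)
    fix x y assume "x \<in> {a..<b}" "y \<in> {a..<b}" "w x = w y"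
    then show "x = y"
      using least[of x] least[of y] unfolding P_def by (metis atLeastLessThan_iff leD linorder_cases)
  qed
  ultimately show thesis
    using b(2) that by blast
qed

lemma has_cycle_of_length_closed_walk:
  assumes "simple_graph E" "a < b" "w a = w b" "inj_on w {a..<b}"
    and edge: "\<And>n. E (w n) (w (Suc n))" and no_return: "\<And>n. w (Suc (Suc n)) \<noteq> w n"
  shows "has_cycle_of_length E (b - a)"
proof -
  define L where "L = b - a"
  define c where "c j = w (a + j)" for j
  have "b \<noteq> Suc a"
    using edge[of a] \<open>w a = w b\<close> \<open>simple_graph E\<close> by (auto simp: simple_graph_def)
  moreover have "b \<noteq> Suc (Suc a)"
    using no_return[of a] \<open>w a = w b\<close> by auto
  ultimately have "L \<ge> 3"
    using \<open>a < b\<close> by (simp add: L_def)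
  moreover have "inj_on c {..<L}"
  proof (rule inj_onI)
    fix x y assume "x \<in> {..<L}" "y \<in> {..<L}" "c x = c y"
    then have "a + x \<in> {a..<b}" "a + y \<in> {a..<b}" "w (a + x) = w (a + y)"
      by (auto simp: L_def c_def)
    then show "x = y"
      using inj_on_eq_iff[OF \<open>inj_on w {a..<b}\<close>] by auto
  qed
  moreover have "E (c i) (c (Suc i mod L))" if "i < L" for i
  proof -
    have "c (Suc i mod L) = w (Suc (a + i))"
    proof (cases "Suc i < L")
      case True
      then show ?thesis by (simp add: c_def)
    next
      case False
      then have "Suc i = L" "Suc (a + i) = b"
        using that by (auto simp: L_def)
      then show ?thesis
        using \<open>w a = w b\<close> by (simp add: c_def)
    qed
    then show ?thesis
      using edge by (simp add: c_def)
  qed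
  ultimately show ?thesis
    unfolding has_cycle_of_length_def L_def by blast
qed

lemma short_cycle_if_min_degree_two:
  assumes "simple_graph E" "finite W" "W \<noteq> {}"
    and "\<And>v. v \<in> W \<Longrightarrow> \<exists>u\<in>W. \<exists>w\<in>W. u \<noteq> w \<and> E v u \<and> E v w"
  obtains L where "has_cycle_of_length E L" "L \<le> card W"
proof -
  obtain v where "v \<in> W"
    using \<open>W \<noteq> {}\<close> by blast
  obtain w where walk: "\<And>n. w n \<in> W" "\<And>n. E (w n) (w (Suc n))" "\<And>n. w (Suc (Suc n)) \<noteq> w n"
    using non_backtracking_walk[of v W E, OF \<open>v \<in> W\<close> assms(4)] by blast
  obtain a b where ab: "a < b" "b \<le> card W" "w a = w b" "inj_on w {a..<b}"
    using first_repetition[of W w, OF \<open>finite W\<close> walk(1)] by blast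
  have "has_cycle_of_length E (b - a)"
    using has_cycle_of_length_closed_walk[OF \<open>simple_graph E\<close> ab(1,3,4) walk(2,3)] .
  moreover have "b - a \<le> card W"
    using ab(2) by linarith
  ultimately show thesis
    by (rule that)
qed

lemma low_degree_vertex_if_below_girth:
  assumes "simple_graph E" "finite W" "W \<noteq> {}" "enat (card W) < girth E"
  obtains v where "v \<in> W" "\<And>u u'. u \<in> W \<Longrightarrow> u' \<in> W \<Longrightarrow> E v u \<Longrightarrow> E v u' \<Longrightarrow> u = u'"
proof -
  have "\<exists>v\<in>W. \<forall>u\<in>W. \<forall>u'\<in>W. E v u \<longrightarrow> E v u' \<longrightarrow> u = u'"
  proof (rule ccontr)
    assume "\<not> ?thesis"
    then have deg: "\<exists>u\<in>W. \<exists>u'\<in>W. u \<noteq> u' \<and> E v u \<and> E v u'" if "v \<in> W" for v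
      using that by blast
    obtain L where L: "has_cycle_of_length E L" "L \<le> card W"
      using short_cycle_if_min_degree_two[OF assms(1-3) deg] by blast
    have "girth E \<le> enat L"
      by (rule girth_le_cycle_length[OF L(1)])
    also have "\<dots> \<le> enat (card W)"
      using L(2) by simp
    finally show False
      using assms(4) by simp
  qed
  then show thesis
    using that by blast
qed

lemma independent_half_if_below_girth:
  assumes "simple_graph E" "finite W" "enat (card W) < girth E"
  shows "\<exists>I\<subseteq>W. independent_set E I \<and> card W \<le> 2 * card I"
  using assms(2,3)
proof (induction "card W" arbitrary: W rule: less_induct)
  case less
  show ?case
  proof (cases "W = {}")
    case True
    then show ?thesis by (auto simp: independent_set_def)
  next
    case False
    obtain v where v: "v \<in> W" and unique: "\<And>u u'. u \<in> W \<Longrightarrow> u' \<in> W \<Longrightarrow> E v u \<Longrightarrow> E v u' \<Longrightarrow> u = u'"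
      using low_degree_vertex_if_below_girth[OF \<open>simple_graph E\<close> less.prems(1) False less.prems(2)]
      by blast
    define N where "N = {u \<in> W. E v u}"
    define W' where "W' = W - insert v N"
    have "card N \<le> 1"
      using unique less.prems(1) by (auto simp: N_def card_le_Suc0_iff_eq)
    then have "card (insert v N) \<le> 2"
      using less.prems(1) by (simp add: N_def card_insert_if)
    then have W_le: "card W \<le> card W' + 2"
      using less.prems(1) card_Diff_subset[of "insert v N" W] v by (simp add: W'_def N_def card_mono)
    have "card W' < card W"
      unfolding W'_def using v less.prems(1) by (intro psubset_card_mono) auto
    moreover have "enat (card W') < girth E"
      using \<open>card W' < card W\<close> less.prems(2) by (meson enat_ord_simps(2) order.strict_trans)
    moreover have "finite W'"
      using less.prems(1) by (simp add: W'_def)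
    ultimately obtain I where I: "I \<subseteq> W'" "independent_set E I" "card W' \<le> 2 * card I"
      using less.hyps by blast
    have "independent_set E (insert v I)"
      using I(1,2) \<open>simple_graph E\<close> unfolding independent_set_def simple_graph_def W'_def N_def by blast
    moreover have "finite I" "v \<notin> I"
      using I(1) less.prems(1) by (auto simp: W'_def intro: rev_finite_subset)
    ultimately show ?thesis
      using I(1,3) W_le v unfolding W'_def by (intro exI[of _ "insert v I"]) (auto simp: card_insert_if)
  qed
qed

section \<open>Simplicial complexes and their geometric realization\<close>

definition downclosed :: "'a set set \<Rightarrow> bool" where
  "downclosed K \<longleftrightarrow> (\<forall>\<sigma> \<rho>. \<sigma> \<in> K \<longrightarrow> \<rho> \<subseteq> \<sigma> \<longrightarrow> \<rho> \<in> K)"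

lemma downclosed_Delta_t: "downclosed (Delta_t d (E :: 'a::finite \<Rightarrow> 'a \<Rightarrow> bool))"
  unfolding downclosed_def Delta_t_def
proof (intro allI impI)
  fix \<sigma> \<rho> :: "'a set"
  assume "\<sigma> \<in> {\<sigma>. d \<le> indep_num E (UNIV - \<sigma>)}" "\<rho> \<subseteq> \<sigma>"
  then have "d \<le> indep_num E (UNIV - \<sigma>)" "UNIV - \<sigma> \<subseteq> UNIV - \<rho>"
    by auto
  then show "\<rho> \<in> {\<sigma>. d \<le> indep_num E (UNIV - \<sigma>)}"
    using indep_num_mono[of "UNIV - \<sigma>" "UNIV - \<rho>" E] by simp
qed

lemma small_set_in_Delta_t:
  fixes E :: "'a::finite \<Rightarrow> 'a \<Rightarrow> bool"
  assumes "simple_graph E" "girth E \<ge> enat (2 * d)" "card \<sigma> + 2 * d \<le> CARD('a) + 1"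
  shows "\<sigma> \<in> Delta_t d E"
proof (cases "d = 0")
  case True
  then show ?thesis by (simp add: Delta_t_def)
next
  case False
  have "2 * d - 1 \<le> card (UNIV - \<sigma>)"
    using assms(3) by (simp add: card_Diff_subset)
  then obtain W where W: "W \<subseteq> UNIV - \<sigma>" "card W = 2 * d - 1"
    by (rule obtain_subset_with_card_n)
  have "enat (card W) < enat (2 * d)"
    using W(2) False by simp
  also have "\<dots> \<le> girth E"
    by (rule assms(2))
  finally have "enat (card W) < girth E" .
  then obtain I where I: "I \<subseteq> W" "independent_set E I" "card W \<le> 2 * card I"
    using independent_half_if_below_girth[OF assms(1) finite] by blast
  have "d \<le> card I"
    using I(3) W(2) by linarith
  also have "card I \<le> indep_num E (UNIV - \<sigma>)"
    using I W by (intro card_le_indep_num) auto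
  finally show ?thesis
    unfolding Delta_t_def by simp
qed

definition simplex_face :: "'a::finite set \<Rightarrow> (real^'a) set" where
  "simplex_face \<tau> = convex hull ((\<lambda>v. axis v 1) ` \<tau>)"

(* The point set of geom_real K, moved to real^'a so that affine dimension and the extension
   theorems for Euclidean spaces apply. *)
definition realization :: "'a::finite set set \<Rightarrow> (real^'a) set" where
  "realization K = {y. (\<forall>v. 0 \<le> y$v) \<and> sum (\<lambda>v. y$v) UNIV = 1 \<and> {v. y$v \<noteq> 0} \<in> K}"

lemma inj_on_axis_one: "inj_on (\<lambda>v. axis v (1::real)) A"
  by (auto simp: inj_on_def axis_eq_axis)

lemma affine_independent_axes: "\<not> affine_dependent ((\<lambda>v. axis v (1::real)) ` (\<tau> :: 'a::finite set))"
proof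
  assume "affine_dependent ((\<lambda>v. axis v (1::real)) ` \<tau>)"
  then have "dependent ((\<lambda>v. axis v (1::real)) ` \<tau>)"
    by (rule affine_dependent_imp_dependent)
  moreover have "(\<lambda>v. axis v (1::real)) ` \<tau> \<subseteq> Basis"
    by (auto simp: Basis_vec_def)
  ultimately show False
    using independent_Basis dependent_mono by blast
qed

lemma mem_simplex_face:
  "y \<in> simplex_face \<tau> \<longleftrightarrow> (\<forall>v. 0 \<le> y$v) \<and> sum (\<lambda>v. y$v) UNIV = 1 \<and> (\<forall>v. v \<notin> \<tau> \<longrightarrow> y$v = 0)"
proof -
  define S where "S = {y :: real^'a. (\<forall>v. 0 \<le> y$v) \<and> sum (\<lambda>v. y$v) UNIV = 1 \<and> (\<forall>v. v \<notin> \<tau> \<longrightarrow> y$v = 0)}"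
  have "simplex_face \<tau> \<subseteq> S"
    unfolding simplex_face_def
  proof (rule hull_minimal)
    show "convex S"
      by (auto simp: S_def convex_def sum.distrib sum_distrib_left[symmetric])
  qed (auto simp: S_def axis_def)
  moreover have "y \<in> simplex_face \<tau>" if y: "y \<in> S" for y
  proof -
    have "y = (\<Sum>v\<in>\<tau>. (y$v) *\<^sub>R axis v 1)"
      using y by (auto simp: S_def vec_eq_iff axis_def if_distrib sum.delta' cong: if_cong)
    also have "\<dots> \<in> simplex_face \<tau>"
      unfolding simplex_face_def
    proof (rule convex_sum)
      show "(\<Sum>v\<in>\<tau>. y$v) = 1"
        using y sum.mono_neutral_right[of UNIV \<tau> "\<lambda>v. y$v"] by (auto simp: S_def)
    qed (use y in \<open>auto simp: S_def intro: hull_inc\<close>)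
    finally show ?thesis .
  qed
  ultimately have "simplex_face \<tau> = S"
    by blast
  then show ?thesis
    by (simp add: S_def)
qed

lemma convex_simplex_face: "convex (simplex_face \<tau>)"
  by (simp add: simplex_face_def)

lemma compact_simplex_face: "compact (simplex_face \<tau>)"
  by (simp add: simplex_face_def compact_convex_hull finite_imp_compact)

lemma aff_dim_simplex_face: "aff_dim (simplex_face \<tau>) = int (card \<tau>) - 1"
  using aff_dim_affine_independent[OF affine_independent_axes[of \<tau>]]
  by (simp add: simplex_face_def aff_dim_convex_hull card_image[OF inj_on_axis_one])

lemma rel_frontier_simplex_face:
  "rel_frontier (simplex_face \<tau>) = {y \<in> simplex_face \<tau>. {v. y$v \<noteq> 0} \<noteq> \<tau>}"
proof -
  have axes_Diff: "(\<lambda>v. axis v (1::real)) ` \<tau> - {axis v 1} = (\<lambda>v. axis v 1) ` (\<tau> - {v})" for v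
    by (simp add: image_set_diff[OF inj_on_axis_one])
  have face_Diff: "y \<in> simplex_face (\<tau> - {v}) \<longleftrightarrow> y \<in> simplex_face \<tau> \<and> y$v = 0" for y v
    by (auto simp: mem_simplex_face)
  have "rel_frontier (simplex_face \<tau>) = (\<Union>v\<in>\<tau>. simplex_face (\<tau> - {v}))"
    unfolding simplex_face_def rel_frontier_convex_hull_cases[OF affine_independent_axes]
    by (simp add: Setcompr_eq_image image_image axes_Diff)
  also have "\<dots> = {y \<in> simplex_face \<tau>. {v. y$v \<noteq> 0} \<noteq> \<tau>}"
  proof (intro set_eqI iffI)
    fix y assume "y \<in> (\<Union>v\<in>\<tau>. simplex_face (\<tau> - {v}))"
    then show "y \<in> {y \<in> simplex_face \<tau>. {v. y$v \<noteq> 0} \<noteq> \<tau>}"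
      using face_Diff by blast
  next
    fix y assume y: "y \<in> {y \<in> simplex_face \<tau>. {v. y$v \<noteq> 0} \<noteq> \<tau>}"
    then have "{v. y$v \<noteq> 0} \<subseteq> \<tau>"
      by (auto simp: mem_simplex_face)
    then obtain v where "v \<in> \<tau>" "y$v = 0"
      using y by blast
    then show "y \<in> (\<Union>v\<in>\<tau>. simplex_face (\<tau> - {v}))"
      using face_Diff y by blast
  qed
  finally show ?thesis .
qed

lemma realization_mono: "K \<subseteq> L \<Longrightarrow> realization K \<subseteq> realization L"
  by (auto simp: realization_def)

lemma realization_UNIV: "realization UNIV = simplex_face UNIV"
  by (simp add: realization_def mem_simplex_face set_eq_iff)

lemma realization_eq_Union:
  assumes "downclosed K"
  shows "realization K = (\<Union>\<sigma>\<in>K. simplex_face \<sigma>)"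
proof (intro equalityI subsetI)
  fix y assume "y \<in> realization K"
  then have "y \<in> simplex_face {v. y$v \<noteq> 0}" "{v. y$v \<noteq> 0} \<in> K"
    by (auto simp: realization_def mem_simplex_face)
  then show "y \<in> (\<Union>\<sigma>\<in>K. simplex_face \<sigma>)"
    by blast
next
  fix y assume "y \<in> (\<Union>\<sigma>\<in>K. simplex_face \<sigma>)"
  then obtain \<sigma> where \<sigma>: "\<sigma> \<in> K" "y \<in> simplex_face \<sigma>"
    by blast
  then have "{v. y$v \<noteq> 0} \<subseteq> \<sigma>"
    by (auto simp: mem_simplex_face)
  then have "{v. y$v \<noteq> 0} \<in> K"
    using assms \<sigma>(1) unfolding downclosed_def by blast
  then show "y \<in> realization K"
    using \<sigma>(2) by (simp add: realization_def mem_simplex_face)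
qed

lemma closed_realization: "downclosed K \<Longrightarrow> closed (realization K)"
  by (simp add: realization_eq_Union closed_Union compact_imp_closed compact_simplex_face)

lemma component_not_subset_lower_dim:
  fixes T :: "'b::euclidean_space set"
  assumes "affine T" "closed A" "C \<in> components (T - A)" "aff_dim S < aff_dim T"
  shows "\<not> C \<subseteq> S"
proof
  assume "C \<subseteq> S"
  have open_diff: "openin (top_of_set T) (T - A)"
    using \<open>closed A\<close> by (simp add: Diff_eq openin_open_Int open_Compl)
  have "locally connected (T - A)"
    using locally_open_subset[OF convex_imp_locally_connected[OF affine_imp_convex[OF \<open>affine T\<close>]] open_diff] .
  then have "openin (top_of_set (T - A)) C"
    using \<open>C \<in> components (T - A)\<close> by (rule openin_components_locally_connected)
  then have "openin (top_of_set T) C"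
    using open_diff by (rule openin_trans)
  then have "aff_dim C = aff_dim T"
    using \<open>affine T\<close> in_components_nonempty[OF \<open>C \<in> components (T - A)\<close>] by (rule aff_dim_openin)
  moreover have "aff_dim C \<le> aff_dim S"
    using \<open>C \<subseteq> S\<close> by (rule aff_dim_subset)
  ultimately show False
    using \<open>aff_dim S < aff_dim T\<close> by simp
qed

(* The library extension is singular at finitely many points; they can be placed in T - S, since
   no component of T - A fits into the lower-dimensional S. *)
lemma extend_map_lower_dim_to_rel_frontier:
  fixes h :: "'b::euclidean_space \<Rightarrow> 'c::euclidean_space"
  assumes "compact A" "A \<subseteq> S" "affine T" "S \<subseteq> T" "aff_dim S < aff_dim T"
    and "convex U" "bounded U" "aff_dim T \<le> aff_dim U"
    and "continuous_on A h" "h \<in> A \<rightarrow> rel_frontier U"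
  obtains g where "continuous_on S g" "g \<in> S \<rightarrow> rel_frontier U" "\<And>x. x \<in> A \<Longrightarrow> g x = h x"
proof -
  have meets: "C \<inter> (T - S) \<noteq> {}" if "C \<in> components (T - A)" for C
  proof -
    have "\<not> C \<subseteq> S"
      using component_not_subset_lower_dim[OF \<open>affine T\<close> _ that \<open>aff_dim S < aff_dim T\<close>]
        \<open>compact A\<close> by (simp add: compact_imp_closed)
    moreover have "C \<subseteq> T"
      using in_components_subset[OF that] by blast
    ultimately show ?thesis
      by blast
  qed
  have "A \<subseteq> T"
    using assms(2,4) by (rule order_trans)
  obtain K g where "finite K" "K \<subseteq> T - S" "K \<subseteq> T" "disjnt K A"
      "continuous_on (T - K) g" "g \<in> (T - K) \<rightarrow> rel_frontier U"
      and g_eq: "\<And>x. x \<in> A \<Longrightarrow> g x = h x"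
    using extend_map_affine_to_sphere2[OF assms(1,6,7,3) \<open>A \<subseteq> T\<close> assms(8,9,10) meets] by metis
  moreover have "S \<subseteq> T - K"
    using \<open>K \<subseteq> T - S\<close> \<open>S \<subseteq> T\<close> by blast
  ultimately have "continuous_on S g" "g \<in> S \<rightarrow> rel_frontier U"
    by (auto intro: continuous_on_subset)
  then show thesis
    using g_eq that by blast
qed

lemma realization_subset_face_Un:
  "realization L \<subseteq> simplex_face \<tau> \<union> realization (L - {\<tau>})"
  by (auto simp: realization_def mem_simplex_face)

lemma simplex_face_Int_realization_Diff:
  "simplex_face \<tau> \<inter> realization (L - {\<tau>}) \<subseteq> rel_frontier (simplex_face \<tau>)"
  by (auto simp: realization_def rel_frontier_simplex_face)

lemma rel_frontier_simplex_face_subset_realization: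
  assumes "downclosed L" "\<tau> \<in> L"
  shows "rel_frontier (simplex_face \<tau>) \<subseteq> realization (L - {\<tau>})"
proof
  fix y assume "y \<in> rel_frontier (simplex_face \<tau>)"
  then have y: "y \<in> simplex_face \<tau>" "{v. y$v \<noteq> 0} \<noteq> \<tau>"
    by (auto simp: rel_frontier_simplex_face)
  then have "{v. y$v \<noteq> 0} \<subseteq> \<tau>"
    by (auto simp: mem_simplex_face)
  then have "{v. y$v \<noteq> 0} \<in> L"
    using assms unfolding downclosed_def by blast
  then show "y \<in> realization (L - {\<tau>})"
    using y by (auto simp: realization_def mem_simplex_face)
qed

lemma downclosed_Diff_maximal:
  assumes "downclosed L" "\<And>\<sigma>. \<sigma> \<in> L \<Longrightarrow> \<tau> \<subseteq> \<sigma> \<Longrightarrow> \<sigma> = \<tau>"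
  shows "downclosed (L - {\<tau>})"
  using assms unfolding downclosed_def by blast

(* Where H meets the maximal face F, replace it by an extension to D of H restricted to the
   preimage of the relative boundary of F; such an extension into that sphere exists since D has
   smaller dimension than F. *)
lemma push_off_maximal_face:
  fixes H :: "'b::euclidean_space \<Rightarrow> real^'a::finite"
  assumes "compact D" "affine T" "D \<subseteq> T" "aff_dim D < aff_dim T"
    and "downclosed L" "\<tau> \<in> L" "\<And>\<sigma>. \<sigma> \<in> L \<Longrightarrow> \<tau> \<subseteq> \<sigma> \<Longrightarrow> \<sigma> = \<tau>"
    and "aff_dim T \<le> int (card \<tau>) - 1"
    and "continuous_on D H" "H ` D \<subseteq> realization L"
  obtains H' where "continuous_on D H'" "H' ` D \<subseteq> realization (L - {\<tau>})"
    "\<And>x. x \<in> D \<Longrightarrow> H x \<in> realization (L - {\<tau>}) \<Longrightarrow> H' x = H x"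
proof -
  define F where "F = simplex_face \<tau>"
  define L' where "L' = L - {\<tau>}"
  have closed_preimage: "closed (D \<inter> H -` X)" if "closed X" for X
    using assms(9) compact_imp_closed[OF assms(1)] that by (rule continuous_closed_preimage)
  define A0 where "A0 = D \<inter> H -` rel_frontier F"
  have "compact A0"
    using compact_Int_closed[OF assms(1) closed_preimage[OF closed_rel_frontier]]
    by (simp add: A0_def Int_left_absorb)
  have "A0 \<subseteq> D" "H \<in> A0 \<rightarrow> rel_frontier F"
    by (auto simp: A0_def)
  have "convex F" "bounded F" "aff_dim T \<le> aff_dim F"
    using assms(8) by (simp_all add: F_def convex_simplex_face compact_imp_bounded[OF compact_simplex_face]
        aff_dim_simplex_face)
  moreover have "continuous_on A0 H"
    using assms(9) \<open>A0 \<subseteq> D\<close> by (rule continuous_on_subset)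
  ultimately obtain g where g: "continuous_on D g" "g \<in> D \<rightarrow> rel_frontier F"
      and g_eq: "\<And>x. x \<in> A0 \<Longrightarrow> g x = H x"
    using extend_map_lower_dim_to_rel_frontier[OF \<open>compact A0\<close> \<open>A0 \<subseteq> D\<close> assms(2-4)]
      \<open>H \<in> A0 \<rightarrow> rel_frontier F\<close> by metis
  have overlap: "F \<inter> realization L' \<subseteq> rel_frontier F"
    unfolding F_def L'_def by (rule simplex_face_Int_realization_Diff)
  define H' where "H' x = (if H x \<in> F then g x else H x)" for x
  have "continuous_on (D \<inter> H -` F \<union> D \<inter> H -` realization L') H'"
    unfolding H'_def
  proof (rule continuous_on_cases)
    show "closed (D \<inter> H -` F)" "closed (D \<inter> H -` realization L')"
      using closed_preimage[OF compact_imp_closed[OF compact_simplex_face]]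
        closed_preimage[OF closed_realization[OF downclosed_Diff_maximal[OF assms(5,7)]]]
      by (simp_all add: F_def L'_def)
  qed (use g(1) assms(9) overlap g_eq in \<open>auto simp: A0_def intro: continuous_on_subset\<close>)
  moreover have "D \<inter> H -` F \<union> D \<inter> H -` realization L' = D"
    using realization_subset_face_Un[of L \<tau>] assms(10) by (auto simp: F_def L'_def)
  moreover have "H' ` D \<subseteq> realization L'"
    using g(2) rel_frontier_simplex_face_subset_realization[OF assms(5,6)] realization_subset_face_Un[of L \<tau>]
      assms(10) by (auto simp: H'_def F_def L'_def)
  moreover have "H' x = H x" if "x \<in> D" "H x \<in> realization L'" for x
    using that overlap g_eq by (auto simp: H'_def A0_def)
  ultimately show thesis
    using that unfolding L'_def by simp
qed

lemma push_into_subcomplex: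
  fixes H :: "'b::euclidean_space \<Rightarrow> real^'a::finite"
  assumes "compact D" "affine T" "D \<subseteq> T" "aff_dim D < aff_dim T" "downclosed K"
    and "downclosed L" "K \<subseteq> L" "\<And>\<tau>. \<tau> \<in> L - K \<Longrightarrow> aff_dim T \<le> int (card \<tau>) - 1"
    and "continuous_on D H" "H ` D \<subseteq> realization L"
  shows "\<exists>H'. continuous_on D H' \<and> H' ` D \<subseteq> realization K \<and> (\<forall>x\<in>D. H x \<in> realization K \<longrightarrow> H' x = H x)"
  using assms(6-10)
proof (induction "card (L - K)" arbitrary: L H rule: less_induct)
  case less
  show ?case
  proof (cases "L - K = {}")
    case True
    then have "L = K"
      using less.prems(2) by blast
    then show ?thesis
      using less.prems(4,5) by blast
  next
    case False
    obtain \<tau> where \<tau>: "\<tau> \<in> L - K" and max: "\<forall>\<sigma>\<in>L - K. \<tau> \<subseteq> \<sigma> \<longrightarrow> \<tau> = \<sigma>"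
      using finite_has_maximal[OF finite False] by blast
    have maximal: "\<sigma> = \<tau>" if "\<sigma> \<in> L" "\<tau> \<subseteq> \<sigma>" for \<sigma>
      using that \<tau> max \<open>downclosed K\<close> unfolding downclosed_def by blast
    have "\<tau> \<in> L" "aff_dim T \<le> int (card \<tau>) - 1"
      using \<tau> less.prems(3) by auto
    then obtain H1 where H1: "continuous_on D H1" "H1 ` D \<subseteq> realization (L - {\<tau>})"
        and H1_eq: "\<And>x. x \<in> D \<Longrightarrow> H x \<in> realization (L - {\<tau>}) \<Longrightarrow> H1 x = H x"
      using push_off_maximal_face[OF assms(1-4) less.prems(1) _ maximal _ less.prems(4,5)] by metis
    have "L - {\<tau>} - K = (L - K) - {\<tau>}"
      by blast
    then have "card (L - {\<tau>} - K) < card (L - K)"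
      using card_Diff1_less[OF finite \<tau>] by argo
    moreover have "K \<subseteq> L - {\<tau>}"
      using less.prems(2) \<tau> by blast
    moreover have "aff_dim T \<le> int (card \<sigma>) - 1" if "\<sigma> \<in> L - {\<tau>} - K" for \<sigma>
      using that less.prems(3) by blast
    ultimately obtain H' where H': "continuous_on D H'" "H' ` D \<subseteq> realization K"
        and H'_eq: "\<forall>x\<in>D. H1 x \<in> realization K \<longrightarrow> H' x = H1 x"
      using less.hyps[OF _ downclosed_Diff_maximal[OF less.prems(1) maximal] _ _ H1] by blast
    have "realization K \<subseteq> realization (L - {\<tau>})"
      using \<open>K \<subseteq> L - {\<tau>}\<close> by (rule realization_mono)
    then have "H' x = H x" if "x \<in> D" "H x \<in> realization K" for x
      using that H1_eq H'_eq by auto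
    then show ?thesis
      using H' by blast
  qed
qed

lemma extend_map_into_realization:
  fixes g :: "'b::euclidean_space \<Rightarrow> real^'a::finite"
  assumes "compact D" "affine T" "D \<subseteq> T" "aff_dim D < aff_dim T" "downclosed K"
    and "\<And>\<sigma>. \<sigma> \<notin> K \<Longrightarrow> aff_dim T \<le> int (card \<sigma>) - 1"
    and "closed S" "S \<subseteq> D" "continuous_on S g" "g ` S \<subseteq> realization K"
  obtains G where "continuous_on D G" "G ` D \<subseteq> realization K" "\<And>x. x \<in> S \<Longrightarrow> G x = g x"
proof -
  obtain v :: 'a where True
    by blast
  have "axis v 1 \<in> simplex_face UNIV"
    unfolding simplex_face_def by (rule hull_inc) simp
  then have nonempty: "simplex_face (UNIV :: 'a set) \<noteq> {}"
    by blast
  have "g ` S \<subseteq> simplex_face UNIV"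
    using assms(10) realization_mono[OF subset_UNIV, of K] realization_UNIV by blast
  moreover have "closedin (top_of_set D) S"
    using assms(8,7) by (rule closed_subset)
  ultimately obtain G0 where G0: "continuous_on D G0" "G0 ` D \<subseteq> simplex_face UNIV"
      and G0_eq: "\<And>x. x \<in> S \<Longrightarrow> G0 x = g x"
    using Dugundji[OF convex_simplex_face nonempty _ assms(9)] by metis
  have "downclosed (UNIV :: 'a set set)"
    by (simp add: downclosed_def)
  moreover have "aff_dim T \<le> int (card \<sigma>) - 1" if "\<sigma> \<in> UNIV - K" for \<sigma>
    using that assms(6) by blast
  moreover have "G0 ` D \<subseteq> realization UNIV"
    using G0(2) by (simp add: realization_UNIV)
  ultimately obtain G where "continuous_on D G" "G ` D \<subseteq> realization K"
      and G_eq: "\<forall>x\<in>D. G0 x \<in> realization K \<longrightarrow> G x = G0 x"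
    using push_into_subcomplex[OF assms(1-5) _ subset_UNIV _ G0(1)] by blast
  moreover have "G x = g x" if "x \<in> S" for x
  proof -
    have "x \<in> D" "G0 x \<in> realization K"
      using that G0_eq assms(8,10) by auto
    then show ?thesis
      using G_eq G0_eq[OF that] by simp
  qed
  ultimately show thesis
    using that by blast
qed

section \<open>Complexes containing a full skeleton are highly connected\<close>

definition coordinate_subspace :: "'a::finite set \<Rightarrow> (real^'a) set" where
  "coordinate_subspace P = {x. \<forall>v. v \<notin> P \<longrightarrow> x$v = 0}"

lemma subspace_coordinate_subspace: "subspace (coordinate_subspace P)"
  by (simp add: subspace_def coordinate_subspace_def)

lemma aff_dim_coordinate_subspace: "aff_dim (coordinate_subspace P) = int (card P)"
proof -
  have "aff_dim (coordinate_subspace P) = int (dim (coordinate_subspace P))"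
    by (rule aff_dim_subspace[OF subspace_coordinate_subspace])
  also have "dim (coordinate_subspace P) = vec.dim (coordinate_subspace P)"
    by (simp add: dim_vec_eq)
  also have "\<dots> = card P"
    unfolding coordinate_subspace_def by (rule dim_substandard_cart)
  finally show ?thesis .
qed

lemma nsphere_eq_top_of_set: "nsphere i = top_of_set {x. (\<Sum>j\<le>i. x j ^ 2) = 1 \<and> (\<forall>j>i. x j = 0)}"
  by (simp add: nsphere euclidean_product_topology)

lemma power2_norm_coordinate_subspace:
  assumes "inj_on e {..i}" "y \<in> coordinate_subspace (e ` {..i})"
  shows "norm y ^ 2 = (\<Sum>j\<le>i. (y $ e j) ^ 2)"
proof -
  have "norm y ^ 2 = (\<Sum>v\<in>UNIV. (y $ v) ^ 2)"
    unfolding power2_norm_eq_inner by (simp add: inner_vec_def power2_eq_square)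
  also have "\<dots> = (\<Sum>v\<in>e ` {..i}. (y $ v) ^ 2)"
    using assms(2) by (intro sum.mono_neutral_right) (auto simp: coordinate_subspace_def)
  also have "\<dots> = (\<Sum>j\<le>i. (y $ e j) ^ 2)"
    by (simp add: sum.reindex[OF assms(1)])
  finally show ?thesis .
qed

definition coords_embed :: "nat \<Rightarrow> (nat \<Rightarrow> 'a::finite) \<Rightarrow> (nat \<Rightarrow> real) \<Rightarrow> real^'a" where
  "coords_embed i e x = (\<chi> v. if v \<in> e ` {..i} then x (inv_into {..i} e v) else 0)"

definition coords_restrict :: "nat \<Rightarrow> (nat \<Rightarrow> 'a::finite) \<Rightarrow> real^'a \<Rightarrow> nat \<Rightarrow> real" where
  "coords_restrict i e y = (\<lambda>j. if j \<le> i then y $ e j else 0)"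

lemma coords_embed_nth: "inj_on e {..i} \<Longrightarrow> j \<le> i \<Longrightarrow> coords_embed i e x $ e j = x j"
  by (simp add: coords_embed_def inv_into_f_f)

lemma coords_embed_in_coordinate_subspace: "coords_embed i e x \<in> coordinate_subspace (e ` {..i})"
  by (simp add: coords_embed_def coordinate_subspace_def)

lemma coords_embed_restrict:
  assumes "y \<in> coordinate_subspace (e ` {..i})"
  shows "coords_embed i e (coords_restrict i e y) = y"
proof -
  have "coords_embed i e (coords_restrict i e y) $ v = y $ v" for v
  proof (cases "v \<in> e ` {..i}")
    case True
    then have "inv_into {..i} e v \<le> i" "e (inv_into {..i} e v) = v"
      using inv_into_into[of v e "{..i}"] f_inv_into_f[of v e "{..i}"] by auto
    then show ?thesis
      using True by (simp add: coords_embed_def coords_restrict_def)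
  next
    case False
    then show ?thesis
      using assms by (simp add: coords_embed_def coordinate_subspace_def)
  qed
  then show ?thesis
    by (simp add: vec_eq_iff)
qed

lemma continuous_on_coords_embed: "continuous_on S (coords_embed i e)"
proof -
  have "continuous_on S (\<lambda>x. if v \<in> e ` {..i} then x (inv_into {..i} e v) else 0)" for v
    by (cases "v \<in> e ` {..i}") (simp_all add: continuous_on_subset[OF continuous_on_product_coordinates])
  then show ?thesis
    unfolding coords_embed_def by (rule continuous_on_vec_lambda)
qed

lemma continuous_on_coords_restrict: "continuous_on S (coords_restrict i e)"
proof -
  have "continuous_on S (\<lambda>y. if j \<le> i then y $ e j else 0)" for j
    by (cases "j \<le> i") (simp_all add: continuous_on_component continuous_on_id)
  then show ?thesis
    unfolding coords_restrict_def by (rule continuous_on_coordinatewise_then_product)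
qed

lemma homeomorphic_maps_nsphere_coordinate_sphere:
  assumes "inj_on e {..i}"
  shows "homeomorphic_maps (nsphere i) (top_of_set (coordinate_subspace (e ` {..i}) \<inter> sphere 0 1))
    (coords_embed i e) (coords_restrict i e)"
proof -
  define Sph where "Sph = {x :: nat \<Rightarrow> real. (\<Sum>j\<le>i. x j ^ 2) = 1 \<and> (\<forall>j>i. x j = 0)}"
  define S where "S = coordinate_subspace (e ` {..i}) \<inter> sphere 0 1"
  note norm_eq = power2_norm_coordinate_subspace[OF assms]
  have "coords_embed i e x \<in> S" if "x \<in> Sph" for x
  proof -
    have "norm (coords_embed i e x) ^ 2 = 1"
      using that norm_eq[OF coords_embed_in_coordinate_subspace] coords_embed_nth[OF assms]
      by (simp add: Sph_def)
    then have "norm (coords_embed i e x) = 1"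
      using norm_ge_zero[of "coords_embed i e x"] by (auto simp: power2_eq_1_iff)
    then show ?thesis
      by (simp add: S_def coords_embed_in_coordinate_subspace)
  qed
  moreover have "coords_restrict i e y \<in> Sph" if "y \<in> S" for y
    using that norm_eq[of y] by (simp add: S_def Sph_def coords_restrict_def)
  moreover have "coords_restrict i e (coords_embed i e x) = x" if "x \<in> Sph" for x
    using that coords_embed_nth[OF assms] by (auto simp: coords_restrict_def Sph_def)
  moreover have "coords_embed i e (coords_restrict i e y) = y" if "y \<in> S" for y
    using that by (intro coords_embed_restrict) (simp add: S_def)
  ultimately have "homeomorphic_maps (top_of_set Sph) (top_of_set S) (coords_embed i e) (coords_restrict i e)"
    by (simp add: homeomorphic_maps_def continuous_on_coords_embed continuous_on_coords_restrict)
  then show ?thesis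
    by (simp add: nsphere_eq_top_of_set Sph_def S_def)
qed

lemma nsphere_homeomorphic_coordinate_sphere:
  fixes P :: "'a::finite set"
  assumes "card P = Suc i"
  shows "nsphere i homeomorphic_space top_of_set (coordinate_subspace P \<inter> sphere 0 1)"
proof -
  obtain e where "bij_betw e {..<card P} P"
    using ex_bij_betw_nat_finite[of P] by (auto simp: atLeast0LessThan)
  then have "inj_on e {..i}" "P = e ` {..i}"
    using assms by (auto simp: bij_betw_def lessThan_Suc_atMost)
  then show ?thesis
    using homeomorphic_maps_nsphere_coordinate_sphere homeomorphic_maps_imp_homeomorphic_space by metis
qed

lemma nullhomotopic_cong:
  assumes "homotopic_with (\<lambda>_. True) X Y g (\<lambda>_. c)" "\<And>x. x \<in> topspace X \<Longrightarrow> f x = g x"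
  shows "homotopic_with (\<lambda>_. True) X Y f (\<lambda>_. c)"
proof -
  have "continuous_map X Y g"
    using homotopic_with_imp_continuous_maps[OF assms(1)] by blast
  then have "continuous_map X Y f"
    by (rule continuous_map_eq) (simp add: assms(2))
  then have "homotopic_with (\<lambda>_. True) X Y f g"
    using assms(2) by (intro homotopic_with_equal) auto
  then show ?thesis
    using assms(1) by (rule homotopic_with_trans)
qed

lemma m_connected_homeomorphic:
  assumes "X homeomorphic_space Y" "m_connected m X"
  shows "m_connected m Y"
proof -
  obtain \<phi> \<psi> where hm: "homeomorphic_maps X Y \<phi> \<psi>"
    using assms(1) by (auto simp: homeomorphic_space_def)
  then have \<phi>: "continuous_map X Y \<phi>" and \<psi>: "continuous_map Y X \<psi>"
    and \<phi>\<psi>: "\<And>y. y \<in> topspace Y \<Longrightarrow> \<phi> (\<psi> y) = y"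
    by (auto simp: homeomorphic_maps_def)
  have "topspace Y \<noteq> {}"
    using assms(2) continuous_map_image_subset_topspace[OF \<phi>] by (auto simp: m_connected_def)
  moreover have "\<exists>c. homotopic_with (\<lambda>_. True) (nsphere i) Y f (\<lambda>_. c)"
    if "int i \<le> m" and f: "continuous_map (nsphere i) Y f" for i f
  proof -
    have "\<forall>f. continuous_map (nsphere i) X f \<longrightarrow> (\<exists>c. homotopic_with (\<lambda>_. True) (nsphere i) X f (\<lambda>_. c))"
      using assms(2) that(1) unfolding m_connected_def by blast
    then obtain c where "homotopic_with (\<lambda>_. True) (nsphere i) X (\<psi> \<circ> f) (\<lambda>_. c)"
      using continuous_map_compose[OF f \<psi>] by blast
    then have "homotopic_with (\<lambda>_. True) (nsphere i) Y (\<phi> \<circ> (\<psi> \<circ> f)) (\<phi> \<circ> (\<lambda>_. c))"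
      using \<phi> by (rule homotopic_with_compose_continuous_map_left) simp
    then have "homotopic_with (\<lambda>_. True) (nsphere i) Y (\<lambda>x. \<phi> (\<psi> (f x))) (\<lambda>_. \<phi> c)"
      by (simp add: o_def)
    moreover have "f x = \<phi> (\<psi> (f x))" if "x \<in> topspace (nsphere i)" for x
      using that \<phi>\<psi> continuous_map_image_subset_topspace[OF f] by auto
    ultimately have "homotopic_with (\<lambda>_. True) (nsphere i) Y f (\<lambda>_. \<phi> c)"
      by (rule nullhomotopic_cong)
    then show ?thesis
      by blast
  qed
  ultimately show ?thesis
    unfolding m_connected_def by blast
qed

lemma nullhomotopic_if_extends_over_convex:
  fixes S C :: "'b::real_normed_vector set"
  assumes "X homeomorphic_space top_of_set S" "S \<subseteq> C" "convex C" "continuous_map X Y f"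
    and extend: "\<And>g. continuous_map (top_of_set S) Y g \<Longrightarrow>
      \<exists>G. continuous_map (top_of_set C) Y G \<and> (\<forall>x\<in>S. G x = g x)"
  shows "\<exists>c. homotopic_with (\<lambda>_. True) X Y f (\<lambda>_. c)"
proof -
  obtain \<phi> \<psi> where hm: "homeomorphic_maps X (top_of_set S) \<phi> \<psi>"
    using assms(1) by (auto simp: homeomorphic_space_def)
  then have \<phi>: "continuous_map X (top_of_set S) \<phi>" and \<psi>: "continuous_map (top_of_set S) X \<psi>"
    and \<psi>\<phi>: "\<And>x. x \<in> topspace X \<Longrightarrow> \<psi> (\<phi> x) = x"
    by (auto simp: homeomorphic_maps_def)
  obtain G where G: "continuous_map (top_of_set C) Y G" and G_eq: "\<forall>x\<in>S. G x = f (\<psi> x)"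
    using extend[OF continuous_map_compose[OF \<psi> assms(4)]] by auto
  have "continuous_map X (top_of_set C) \<phi>"
    using \<phi> assms(2) by (auto simp: continuous_map_in_subtopology)
  moreover have "contractible_space (top_of_set C)"
    using convex_imp_contractible[OF assms(3)] by simp
  ultimately obtain c where c: "homotopic_with (\<lambda>_. True) X Y (G \<circ> \<phi>) (\<lambda>_. c)"
    using nullhomotopic_through_contractible_space G by metis
  have "f x = (G \<circ> \<phi>) x" if "x \<in> topspace X" for x
    using that G_eq \<psi>\<phi> continuous_map_image_subset_topspace[OF \<phi>] by auto
  then show ?thesis
    using nullhomotopic_cong[OF c] by blast
qed

lemma geom_real_homeomorphic_realization:
  fixes K :: "'a::finite set set"
  shows "geom_real K homeomorphic_space top_of_set (realization K)"
proof -
  define R where "R = {x :: 'a \<Rightarrow> real. (\<forall>v. 0 \<le> x v) \<and> sum x UNIV = 1 \<and> {v. x v \<noteq> 0} \<in> K}"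
  have "geom_real K = top_of_set R"
    by (simp add: geom_real_def R_def euclidean_product_topology)
  moreover have "continuous_on R (\<lambda>x. \<chi> v. x v)"
    by (intro continuous_on_vec_lambda continuous_on_subset[OF continuous_on_product_coordinates]) simp
  moreover have "continuous_on (realization K) (\<lambda>y v. y $ v)"
    by (intro continuous_on_coordinatewise_then_product continuous_on_component continuous_on_id)
  moreover have "(\<lambda>x. \<chi> v. x v) ` R \<subseteq> realization K" "(\<lambda>y v. y $ v) ` realization K \<subseteq> R"
    by (auto simp: R_def realization_def)
  ultimately have "homeomorphic_maps (geom_real K) (top_of_set (realization K)) (\<lambda>x. \<chi> v. x v) (\<lambda>y v. y $ v)"
    by (simp add: homeomorphic_maps_def image_subset_iff_funcset vec_lambda_inverse)
  then show ?thesis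
    by (rule homeomorphic_maps_imp_homeomorphic_space)
qed

lemma extend_map_from_coordinate_sphere:
  fixes K :: "'a::finite set set" and P :: "'a set"
  assumes "downclosed K" "\<And>\<sigma>. card \<sigma> \<le> card P + 1 \<Longrightarrow> \<sigma> \<in> K" "card P < CARD('a)"
    and "continuous_on (coordinate_subspace P \<inter> sphere 0 1) g"
    and "g ` (coordinate_subspace P \<inter> sphere 0 1) \<subseteq> realization K"
  obtains G where "continuous_on (coordinate_subspace P \<inter> cball 0 1) G"
    "G ` (coordinate_subspace P \<inter> cball 0 1) \<subseteq> realization K"
    "\<And>x. x \<in> coordinate_subspace P \<inter> sphere 0 1 \<Longrightarrow> G x = g x"
proof -
  have "P \<noteq> UNIV"
    using assms(3) by auto
  then obtain v where "v \<notin> P"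
    by blast
  define T where "T = coordinate_subspace (insert v P)"
  define B where "B = coordinate_subspace P \<inter> cball 0 1"
  have aff_dim_T: "aff_dim T = int (card P) + 1"
    using \<open>v \<notin> P\<close> by (simp add: T_def aff_dim_coordinate_subspace)
  have "affine T"
    unfolding T_def by (rule subspace_imp_affine[OF subspace_coordinate_subspace])
  have "B \<subseteq> T"
    by (auto simp: B_def T_def coordinate_subspace_def)
  have "aff_dim B \<le> aff_dim (coordinate_subspace P)"
    unfolding B_def by (rule aff_dim_subset) blast
  then have "aff_dim B < aff_dim T"
    by (simp add: aff_dim_T aff_dim_coordinate_subspace)
  have "closed (coordinate_subspace P)"
    by (rule closed_subspace[OF subspace_coordinate_subspace])
  then have "compact B" "closed (coordinate_subspace P \<inter> sphere 0 1)"
    by (simp_all add: B_def closed_Int_compact closed_Int)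
  have faces: "aff_dim T \<le> int (card \<sigma>) - 1" if "\<sigma> \<notin> K" for \<sigma>
  proof -
    have "card P + 1 < card \<sigma>"
      using assms(2)[of \<sigma>] that by (meson not_le)
    then show ?thesis
      by (simp add: aff_dim_T)
  qed
  have "coordinate_subspace P \<inter> sphere 0 1 \<subseteq> B"
    by (auto simp: B_def)
  then obtain G where "continuous_on B G" "G ` B \<subseteq> realization K"
      "\<And>x. x \<in> coordinate_subspace P \<inter> sphere 0 1 \<Longrightarrow> G x = g x"
    using extend_map_into_realization[OF \<open>compact B\<close> \<open>affine T\<close> \<open>B \<subseteq> T\<close> \<open>aff_dim B < aff_dim T\<close>
        assms(1) faces \<open>closed (coordinate_subspace P \<inter> sphere 0 1)\<close> _ assms(4,5)] by metis
  then show thesis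
    using that unfolding B_def by blast
qed

lemma nullhomotopic_sphere_map_into_realization:
  fixes K :: "'a::finite set set"
  assumes "downclosed K" "\<And>\<sigma>. card \<sigma> \<le> i + 2 \<Longrightarrow> \<sigma> \<in> K" "i + 2 \<le> CARD('a)"
    and "continuous_map (nsphere i) (top_of_set (realization K)) f"
  shows "\<exists>c. homotopic_with (\<lambda>_. True) (nsphere i) (top_of_set (realization K)) f (\<lambda>_. c)"
proof -
  obtain P :: "'a set" where P: "card P = Suc i"
    using obtain_subset_with_card_n[of "Suc i" "UNIV :: 'a set"] assms(3) by auto
  define S where "S = coordinate_subspace P \<inter> sphere 0 1"
  define B where "B = coordinate_subspace P \<inter> cball 0 1"
  have "S \<subseteq> B"
    by (auto simp: S_def B_def)
  have "convex B"
    unfolding B_def by (intro convex_Int subspace_imp_convex[OF subspace_coordinate_subspace] convex_cball)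
  show ?thesis
  proof (rule nullhomotopic_if_extends_over_convex[OF _ \<open>S \<subseteq> B\<close> \<open>convex B\<close> assms(4)])
    show "nsphere i homeomorphic_space top_of_set S"
      unfolding S_def using P by (rule nsphere_homeomorphic_coordinate_sphere)
  next
    fix g assume "continuous_map (top_of_set S) (top_of_set (realization K)) g"
    then have "continuous_on S g" "g ` S \<subseteq> realization K"
      by (simp_all add: image_subset_iff_funcset)
    moreover have "\<sigma> \<in> K" if "card \<sigma> \<le> card P + 1" for \<sigma>
      using that assms(2) P by simp
    moreover have "card P < CARD('a)"
      using assms(3) P by simp
    ultimately obtain G where "continuous_on B G" "G ` B \<subseteq> realization K" "\<And>x. x \<in> S \<Longrightarrow> G x = g x"
      using extend_map_from_coordinate_sphere[OF assms(1), of P g] unfolding S_def B_def by metis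
    then show "\<exists>G. continuous_map (top_of_set B) (top_of_set (realization K)) G \<and> (\<forall>x\<in>S. G x = g x)"
      by (auto simp: image_subset_iff_funcset)
  qed
qed

theorem m_connected_realization_if_skeleton:
  fixes K :: "'a::finite set set"
  assumes "downclosed K" "\<And>\<sigma>. card \<sigma> \<le> k + 1 \<Longrightarrow> \<sigma> \<in> K" "k + 1 \<le> CARD('a)"
  shows "m_connected (int k - 1) (top_of_set (realization K))"
proof -
  obtain v :: 'a where True
    by blast
  have "{w. axis v (1::real) $ w \<noteq> 0} = {v}"
    by (auto simp: axis_def)
  then have "axis v 1 \<in> realization K"
    using assms(2)[of "{v}"] by (simp add: realization_def axis_def)
  moreover have "\<exists>c. homotopic_with (\<lambda>_. True) (nsphere i) (top_of_set (realization K)) f (\<lambda>_. c)"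
    if "int i \<le> int k - 1" "continuous_map (nsphere i) (top_of_set (realization K)) f" for i f
    using nullhomotopic_sphere_map_into_realization[OF assms(1) _ _ that(2)] assms(2,3) that(1) by simp
  ultimately show ?thesis
    unfolding m_connected_def by auto
qed

theorem mainTheorem10:
  fixes E :: "'a::finite \<Rightarrow> 'a \<Rightarrow> bool" and d k :: nat
  assumes "simple_graph E"
    and "d \<ge> 2"
    and "CARD('a) \<ge> 2 * d + k"
    and "girth E \<ge> enat (2 * d)"
  shows "m_connected (int k - 1) (geom_real (Delta_t d E))"
proof -
  have "\<sigma> \<in> Delta_t d E" if "card \<sigma> \<le> k + 1" for \<sigma>
    using small_set_in_Delta_t[OF assms(1,4)] that assms(3) by simp
  moreover have "k + 1 \<le> CARD('a)"
    using assms(2,3) by simp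
  ultimately have "m_connected (int k - 1) (top_of_set (realization (Delta_t d E)))"
    by (rule m_connected_realization_if_skeleton[OF downclosed_Delta_t])
  then show ?thesis
    using m_connected_homeomorphic geom_real_homeomorphic_realization homeomorphic_space_sym by blast
qed

end
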